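(* Consider the downtown bathtub model under perimeter control described in the context, with a fixed number $N_s$ of suburban commuters satisfying $N_s>\alpha n_j\left(\frac1\beta+\frac1\gamma\right)\left(\ln 2-\frac12\right)$, and let $C_s^{bp*}$ be the short-run equilibrium bathtub cost, $\theta^p\equiv\frac{C_s^{bp*}v_f}{\alpha L}$. Then (i) $$F^p(\theta^p)\equiv N_s-\alpha n_j\left(\frac1\beta+\frac1\gamma\right)\left(\frac{\theta^p}{4}+\ln 2-1\right)=0;$$ (ii) a queue develops at the perimeter boundary, and its length increases toward the desired arrival time $t^*$ (and decreases after it).
   Context: Downtown traffic: accumulation $n(t)\ge0$ evolves as $\dot n(t)=I(t)-G(t)$ with outflow $G(t)=n(t)v(t)/L$, $L>0$ the trip length, speed $v(t)=v_f(1-n(t)/n_j)$, $v_f,n_j>0$; downtown travel time $T(t)=L/v(t)$. Perimeter control: the critical accumulation is $n_j/2$; the inflow into the downtown area is $I(t)=I_p:=\frac{n_jv_f}{4L}$ when $n(t)=n_j/2$ and $I(t)=A_b(t)$ (the arrival rate of vehicles at the perimeter boundary) when $n(t)<n_j/2$. Vehicles that cannot enter wait in a first-in-first-out point queue at the boundary; if $q(t)$ is the number of queued vehicles when the commuter arriving at work at $t$ reaches the boundary, that commuter's waiting time is $T_w(t)=q(t)/I_p$. With $[t_s^p,t_e^p]$ the period during which control is active, the downtown travel time is $T^p(t)=T(t)$ for $t\le t_s^p$ or $t>t_e^p$ and $T^p(t)=\frac{L}{v_f/2}+T_w(t)$ for $t_s^p<t\le t_e^p$. A suburban commuter arriving at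 time $t$ has bathtub cost $C_s^{bp}(t)=\alpha T^p(t)+s(t)$, where $s(t)=\beta(t^*-t)$ for $t\le t^*$, $s(t)=\gamma(t-t^* )$ for $t>t^*$, $\alpha,\beta,\gamma>0$, $t^*$ the desired arrival time. A short-run equilibrium under perimeter control is $(n(\cdot),q(\cdot),C_s^{bp*})$ with $C_s^{bp}(t)=C_s^{bp*}$ if $n(t)>0$ and $\ge C_s^{bp*}$ if $n(t)=0$; $n(t)=n_j/2$ if $q(t)>0$ and $n(t)\le n_j/2$ if $q(t)=0$; and $\int_{\mathbb{R}}n(t)v(t)/L\,dt=N_s$. *)

theory Defs
  imports "HOL-Analysis.Analysis"
begin

text \<open>Parameters: trip length L, free-flow speed vf, jam accumulation nj,
  value of time alpha, schedule-delay penalties beta (early), gamma (late),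
  desired arrival time tstar.\<close>

definition speed :: "real \<Rightarrow> real \<Rightarrow> real \<Rightarrow> real" where
  "speed vf nj x = vf * (1 - x / nj)"

definition perim_inflow :: "real \<Rightarrow> real \<Rightarrow> real \<Rightarrow> real" where
  "perim_inflow L vf nj = nj * vf / (4 * L)"

definition sched_delay :: "real \<Rightarrow> real \<Rightarrow> real \<Rightarrow> real \<Rightarrow> real" where
  "sched_delay \<beta> \<gamma> tstar t = (if t \<le> tstar then \<beta> * (tstar - t) else \<gamma> * (t - tstar))"

text \<open>Downtown travel time under perimeter control: control is active at t
  exactly when n(t) = nj/2 (the critical accumulation); then the travel time is
  L/(vf/2) plus the waiting time q(t)/I_p, otherwise it is T(t) = L/v(t).\<close>
definition travel_time_p ::
  "real \<Rightarrow> real \<Rightarrow> real \<Rightarrow> (real \<Rightarrow> real) \<Rightarrow> (real \<Rightarrow> real) \<Rightarrow> real \<Rightarrow> real" where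
  "travel_time_p L vf nj n q t =
     (if n t = nj / 2 then L / (vf / 2) + q t / perim_inflow L vf nj
      else L / speed vf nj (n t))"

definition bathtub_cost_p ::
  "real \<Rightarrow> real \<Rightarrow> real \<Rightarrow> real \<Rightarrow> real \<Rightarrow> real \<Rightarrow> real \<Rightarrow>
   (real \<Rightarrow> real) \<Rightarrow> (real \<Rightarrow> real) \<Rightarrow> real \<Rightarrow> real" where
  "bathtub_cost_p L vf nj \<alpha> \<beta> \<gamma> tstar n q t =
     \<alpha> * travel_time_p L vf nj n q t + sched_delay \<beta> \<gamma> tstar t"

definition short_run_eq_p ::
  "real \<Rightarrow> real \<Rightarrow> real \<Rightarrow> real \<Rightarrow> real \<Rightarrow> real \<Rightarrow> real \<Rightarrow> real \<Rightarrow>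
   (real \<Rightarrow> real) \<Rightarrow> (real \<Rightarrow> real) \<Rightarrow> real \<Rightarrow> bool" where
  "short_run_eq_p L vf nj \<alpha> \<beta> \<gamma> tstar Ns n q C \<longleftrightarrow>
     (\<forall>t. 0 \<le> n t \<and> 0 \<le> q t) \<and>
     (\<forall>t. n t > 0 \<longrightarrow> bathtub_cost_p L vf nj \<alpha> \<beta> \<gamma> tstar n q t = C) \<and>
     (\<forall>t. n t = 0 \<longrightarrow> bathtub_cost_p L vf nj \<alpha> \<beta> \<gamma> tstar n q t \<ge> C) \<and>
     (\<forall>t. q t > 0 \<longrightarrow> n t = nj / 2) \<and>
     (\<forall>t. q t = 0 \<longrightarrow> n t \<le> nj / 2) \<and>
     ((\<lambda>t. n t * speed vf nj (n t) / L) has_integral Ns) UNIV"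

end

(*
  In equilibrium the state at each instant t is determined by the normalized travel-time
  budget u(t) = (C - s(t)) vf / (alpha L): the downtown is empty if u <= 1, uncongested
  with n/nj = 1 - 1/u if 1 < u < 2, and at capacity with a boundary queue nj (u - 2) / 4
  if u >= 2. Since u(t) = theta - s(t) vf / (alpha L) is a tent in t with peak theta at t*,
  integrating the outflow gives Ns = alpha nj (1/beta + 1/gamma) G(theta) for an explicit
  primitive G of the outflow profile. As G <= ln 2 - 1/2 on (-oo, 2], the demand bound
  forces theta > 2, where G(theta) = theta/4 + ln 2 - 1, and the queue inherits the
  monotonicity of the tent on either side of t*.
*)
theory Submission
  imports Defs
begin

text \<open>Outflow n v / L, in units of nj vf / L, at an instant with normalized budget u:
  zero for an empty downtown, x (1 - x) with x = n/nj = 1 - 1/u below the critical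
  accumulation, and the capacity 1/4 once u \<ge> 2.\<close>
definition eq_outflow :: "real \<Rightarrow> real" where
  "eq_outflow u = (if u \<le> 1 then 0 else if u \<le> 2 then (u - 1) / u\<^sup>2 else 1 / 4)"

definition eq_outflow_primitive :: "real \<Rightarrow> real" where
  "eq_outflow_primitive u =
     ln (max 1 (min u 2)) + 1 / max 1 (min u 2) - 1 + max (u - 2) 0 / 4"

lemma eq_outflow_primitive_le_1: "u \<le> 1 \<Longrightarrow> eq_outflow_primitive u = 0"
  by (simp add: eq_outflow_primitive_def)

lemma eq_outflow_primitive_ge_2: "2 \<le> u \<Longrightarrow> eq_outflow_primitive u = u / 4 + ln 2 - 1"
  by (simp add: eq_outflow_primitive_def field_simps)

lemma eq_outflow_primitive_between:
  "1 \<le> u \<Longrightarrow> u \<le> 2 \<Longrightarrow> eq_outflow_primitive u = ln u + 1 / u - 1"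
  by (simp add: eq_outflow_primitive_def)

lemma eq_outflow_primitive_le_2:
  assumes "u \<le> 2"
  shows "eq_outflow_primitive u \<le> ln 2 - 1 / 2"
proof -
  define v where "v = max 1 (min u 2)"
  have v: "1 \<le> v" "v \<le> 2" by (auto simp: v_def)
  have "ln (v / 2) \<le> v / 2 - 1" using v by (intro ln_le_minus_one) auto
  then have "ln v \<le> ln 2 + v / 2 - 1" using v by (simp add: ln_div)
  moreover have "1 / v \<le> 3 / 2 - v / 2"
    using mult_nonneg_nonneg[of "v - 1" "2 - v"] v by (simp add: field_simps)
  moreover have "eq_outflow_primitive u = ln v + 1 / v - 1"
    using assms by (simp add: eq_outflow_primitive_def v_def)
  ultimately show ?thesis by linarith
qed

lemma continuous_on_eq_outflow_primitive: "continuous_on S eq_outflow_primitive"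
  unfolding eq_outflow_primitive_def by (intro continuous_intros) auto

lemma eq_outflow_primitive_has_derivative:
  assumes "u \<noteq> 1" "u \<noteq> 2"
  shows "(eq_outflow_primitive has_real_derivative eq_outflow u) (at u)"
proof -
  consider "u < 1" | "1 < u" "u < 2" | "2 < u" using assms by linarith
  then show ?thesis
  proof cases
    case 1
    have "((\<lambda>_. 0) has_real_derivative eq_outflow u) (at u)"
      using 1 by (simp add: eq_outflow_def)
    then show ?thesis
      by (rule has_field_derivative_transform_within_open[of _ _ _ "{..<1}"])
        (use 1 in \<open>auto simp: eq_outflow_primitive_le_1\<close>)
  next
    case 2
    have "((\<lambda>x. ln x + 1 / x - 1) has_real_derivative 1 / u - 1 / u\<^sup>2) (at u)"
      using 2 by (auto intro!: derivative_eq_intros simp: power2_eq_square)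
    moreover have "1 / u - 1 / u\<^sup>2 = eq_outflow u"
      using 2 by (simp add: eq_outflow_def field_simps power2_eq_square)
    ultimately have "((\<lambda>x. ln x + 1 / x - 1) has_real_derivative eq_outflow u) (at u)"
      by simp
    then show ?thesis
      by (rule has_field_derivative_transform_within_open[of _ _ _ "{1<..<2}"])
        (use 2 in \<open>auto simp: eq_outflow_primitive_between\<close>)
  next
    case 3
    have "((\<lambda>x. x / 4 + ln 2 - 1) has_real_derivative eq_outflow u) (at u)"
      using 3 by (auto intro!: derivative_eq_intros simp: eq_outflow_def)
    then show ?thesis
      by (rule has_field_derivative_transform_within_open[of _ _ _ "{2<..}"])
        (use 3 in \<open>auto simp: eq_outflow_primitive_ge_2\<close>)
  qed
qed

lemma has_integral_eq_outflow_affine: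
  fixes \<kappa> d a b :: real
  assumes "\<kappa> \<noteq> 0" "a \<le> b"
  shows "((\<lambda>t. eq_outflow (\<kappa> * t + d)) has_integral
           (eq_outflow_primitive (\<kappa> * b + d) - eq_outflow_primitive (\<kappa> * a + d)) / \<kappa>) {a..b}"
proof -
  define F where "F t = eq_outflow_primitive (\<kappa> * t + d) / \<kappa>" for t
  have "((\<lambda>t. eq_outflow (\<kappa> * t + d)) has_integral F b - F a) {a..b}"
  proof (rule fundamental_theorem_of_calculus_interior_strong
      [where S = "{(1 - d) / \<kappa>, (2 - d) / \<kappa>}"])
    show "continuous_on {a..b} F"
      unfolding F_def using assms
      by (intro continuous_intros continuous_on_compose2[OF continuous_on_eq_outflow_primitive]) auto
  next
    fix x assume x: "x \<in> {a<..<b} - {(1 - d) / \<kappa>, (2 - d) / \<kappa>}"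
    then have "\<kappa> * x + d \<noteq> 1" "\<kappa> * x + d \<noteq> 2" using assms(1) by (auto simp: field_simps)
    moreover have "((\<lambda>t. \<kappa> * t + d) has_real_derivative \<kappa>) (at x)"
      by (auto intro!: derivative_eq_intros)
    ultimately have "(F has_real_derivative eq_outflow (\<kappa> * x + d) * \<kappa> / \<kappa>) (at x)"
      unfolding F_def by (intro DERIV_cdivide DERIV_chain2[OF eq_outflow_primitive_has_derivative])
    then show "(F has_vector_derivative eq_outflow (\<kappa> * x + d)) (at x)"
      using assms(1) by (simp add: has_real_derivative_iff_has_vector_derivative)
  qed (use assms in auto)
  then show ?thesis by (simp add: F_def diff_divide_distrib)
qed

lemma sched_delay_early: "t \<le> tstar \<Longrightarrow> sched_delay \<beta> \<gamma> tstar t = \<beta> * (tstar - t)"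
  by (simp add: sched_delay_def)

lemma sched_delay_late: "tstar \<le> t \<Longrightarrow> sched_delay \<beta> \<gamma> tstar t = \<gamma> * (t - tstar)"
  by (simp add: sched_delay_def)

lemma has_integral_eq_outflow_early:
  fixes \<kappa> \<theta> a t0 :: real
  assumes "\<kappa> > 0" "a \<le> t0" "\<theta> - \<kappa> * (t0 - a) \<le> 1"
  shows "((\<lambda>t. eq_outflow (\<theta> - \<kappa> * (t0 - t))) has_integral eq_outflow_primitive \<theta> / \<kappa>) {a..t0}"
proof -
  have affine: "\<kappa> * t + (\<theta> - \<kappa> * t0) = \<theta> - \<kappa> * (t0 - t)" for t
    by (simp add: algebra_simps)
  have "((\<lambda>t. eq_outflow (\<kappa> * t + (\<theta> - \<kappa> * t0))) has_integral
      (eq_outflow_primitive (\<kappa> * t0 + (\<theta> - \<kappa> * t0)) -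
       eq_outflow_primitive (\<kappa> * a + (\<theta> - \<kappa> * t0))) / \<kappa>) {a..t0}"
    using assms by (intro has_integral_eq_outflow_affine) auto
  then show ?thesis
    unfolding affine using assms by (simp add: eq_outflow_primitive_le_1)
qed

lemma has_integral_eq_outflow_late:
  fixes \<kappa> \<theta> b t0 :: real
  assumes "\<kappa> > 0" "t0 \<le> b" "\<theta> - \<kappa> * (b - t0) \<le> 1"
  shows "((\<lambda>t. eq_outflow (\<theta> - \<kappa> * (t - t0))) has_integral eq_outflow_primitive \<theta> / \<kappa>) {t0..b}"
proof -
  have affine: "- \<kappa> * t + (\<theta> + \<kappa> * t0) = \<theta> - \<kappa> * (t - t0)" for t
    by (simp add: algebra_simps)
  have "((\<lambda>t. eq_outflow (- \<kappa> * t + (\<theta> + \<kappa> * t0))) has_integral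
      (eq_outflow_primitive (- \<kappa> * b + (\<theta> + \<kappa> * t0)) -
       eq_outflow_primitive (- \<kappa> * t0 + (\<theta> + \<kappa> * t0))) / - \<kappa>) {t0..b}"
    using assms by (intro has_integral_eq_outflow_affine) auto
  then show ?thesis
    unfolding affine using assms by (simp add: eq_outflow_primitive_le_1)
qed

lemma has_integral_eq_outflow_sched_delay:
  fixes k \<beta> \<gamma> t0 \<theta> :: real
  assumes "k > 0" "\<beta> > 0" "\<gamma> > 0"
  shows "((\<lambda>t. eq_outflow (\<theta> - k * sched_delay \<beta> \<gamma> t0 t)) has_integral
           eq_outflow_primitive \<theta> * (1 / (k * \<beta>) + 1 / (k * \<gamma>))) UNIV"
proof -
  let ?f = "\<lambda>t. eq_outflow (\<theta> - k * sched_delay \<beta> \<gamma> t0 t)"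
  define a where "a = t0 - (\<bar>\<theta>\<bar> + 1) / (k * \<beta>)"
  define b where "b = t0 + (\<bar>\<theta>\<bar> + 1) / (k * \<gamma>)"
  have kb: "k * \<beta> > 0" and kg: "k * \<gamma> > 0" using assms by auto
  have ab: "a \<le> t0" "t0 \<le> b" using kb kg by (auto simp: a_def b_def)
  have a_end: "k * \<beta> * (t0 - a) = \<bar>\<theta>\<bar> + 1" using assms by (simp add: a_def)
  have b_end: "k * \<gamma> * (b - t0) = \<bar>\<theta>\<bar> + 1" using assms by (simp add: b_def)
  have "((\<lambda>t. eq_outflow (\<theta> - k * \<beta> * (t0 - t))) has_integral
      eq_outflow_primitive \<theta> / (k * \<beta>)) {a..t0}"
    using kb ab a_end by (intro has_integral_eq_outflow_early) auto
  then have early: "(?f has_integral eq_outflow_primitive \<theta> / (k * \<beta>)) {a..t0}"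
    by (rule has_integral_eq[rotated]) (simp add: sched_delay_early mult.assoc)
  have "((\<lambda>t. eq_outflow (\<theta> - k * \<gamma> * (t - t0))) has_integral
      eq_outflow_primitive \<theta> / (k * \<gamma>)) {t0..b}"
    using kg ab b_end by (intro has_integral_eq_outflow_late) auto
  then have late: "(?f has_integral eq_outflow_primitive \<theta> / (k * \<gamma>)) {t0..b}"
    by (rule has_integral_eq[rotated]) (simp add: sched_delay_late mult.assoc)
  have outside: "?f t = 0" if "t \<notin> {a..b}" for t
  proof -
    have "\<bar>\<theta>\<bar> + 1 \<le> k * sched_delay \<beta> \<gamma> t0 t"
    proof (cases "t < a")
      case True
      then have "k * \<beta> * (t0 - a) \<le> k * \<beta> * (t0 - t)" using kb by (intro mult_left_mono) auto
      with a_end True ab show ?thesis by (simp add: sched_delay_early mult.assoc)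
    next
      case False
      then have "b < t" using that by auto
      then have "k * \<gamma> * (b - t0) \<le> k * \<gamma> * (t - t0)" using kg by (intro mult_left_mono) auto
      with b_end \<open>b < t\<close> ab show ?thesis by (simp add: sched_delay_late mult.assoc)
    qed
    then show ?thesis by (simp add: eq_outflow_def)
  qed
  have "(?f has_integral eq_outflow_primitive \<theta> / (k * \<beta>) + eq_outflow_primitive \<theta> / (k * \<gamma>)) UNIV"
    using has_integral_combine[OF ab early late] outside by (rule has_integral_on_superset) auto
  then show ?thesis by (simp add: distrib_left)
qed

lemma sched_delay_strict_antimono_early:
  assumes "\<beta> > 0" "t1 < t2" "t2 \<le> tstar"
  shows "sched_delay \<beta> \<gamma> tstar t2 < sched_delay \<beta> \<gamma> tstar t1"
  using assms by (simp add: sched_delay_early)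

lemma sched_delay_strict_mono_late:
  assumes "\<gamma> > 0" "tstar \<le> t1" "t1 < t2"
  shows "sched_delay \<beta> \<gamma> tstar t1 < sched_delay \<beta> \<gamma> tstar t2"
  using assms by (simp add: sched_delay_late)

lemma short_run_eq_p_outflow_queue:
  fixes L vf nj \<alpha> \<beta> \<gamma> tstar Ns C t :: real and n q :: "real \<Rightarrow> real"
  assumes pos: "L > 0" "vf > 0" "nj > 0" "\<alpha> > 0"
    and eq: "short_run_eq_p L vf nj \<alpha> \<beta> \<gamma> tstar Ns n q C"
  defines "u \<equiv> (C - sched_delay \<beta> \<gamma> tstar t) * vf / (\<alpha> * L)"
  shows "n t * speed vf nj (n t) / L = nj * vf / L * eq_outflow u \<and> q t = nj / 4 * max (u - 2) 0"
proof -
  define \<tau> where "\<tau> = travel_time_p L vf nj n q t * vf / L"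
  have n_nonneg: "0 \<le> n t" and q_nonneg: "0 \<le> q t"
    and q_pos: "q t > 0 \<Longrightarrow> n t = nj / 2" and q_zero: "q t = 0 \<Longrightarrow> n t \<le> nj / 2"
    using eq by (auto simp: short_run_eq_p_def)
  have no_queue: "q t = 0" if "n t \<noteq> nj / 2"
    using that q_pos q_nonneg by fastforce
  have budget_pos: "u = \<tau>" if "n t > 0"
  proof -
    have "C - sched_delay \<beta> \<gamma> tstar t = \<alpha> * travel_time_p L vf nj n q t"
      using eq that by (auto simp: short_run_eq_p_def bathtub_cost_p_def)
    then show ?thesis using pos by (simp add: u_def \<tau>_def)
  qed
  have budget_zero: "u \<le> \<tau>" if "n t = 0"
  proof -
    have "C - sched_delay \<beta> \<gamma> tstar t \<le> \<alpha> * travel_time_p L vf nj n q t"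
      using eq that by (force simp: short_run_eq_p_def bathtub_cost_p_def)
    then have "(C - sched_delay \<beta> \<gamma> tstar t) * (vf / (\<alpha> * L))
        \<le> \<alpha> * travel_time_p L vf nj n q t * (vf / (\<alpha> * L))"
      using pos by (intro mult_right_mono) auto
    then show ?thesis using pos by (simp add: u_def \<tau>_def)
  qed
  consider "n t = 0" | "0 < n t" "n t < nj / 2" | "n t = nj / 2"
    using n_nonneg q_pos q_zero q_nonneg by fastforce
  then show ?thesis
  proof cases
    case 1
    then have "u \<le> 1"
      using budget_zero pos by (simp add: \<tau>_def travel_time_p_def speed_def)
    moreover have "q t = 0"
      using 1 pos by (intro no_queue) simp
    ultimately show ?thesis using 1 by (simp add: eq_outflow_def)
  next
    case 2
    define x where "x = n t / nj"
    have x: "0 < x" "x < 1 / 2" and n_eq: "n t = nj * x"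
      using 2 pos by (auto simp: x_def field_simps)
    have "\<tau> = 1 / (1 - x)"
      using 2 x pos by (simp add: \<tau>_def travel_time_p_def speed_def flip: x_def)
    then have u_eq: "u = 1 / (1 - x)" using budget_pos 2 by simp
    have u: "1 < u" "u < 2" using x unfolding u_eq by (auto simp: field_simps)
    have "eq_outflow u = (u - 1) / u\<^sup>2" using u by (simp add: eq_outflow_def)
    also have "\<dots> = x * (1 - x)" using x by (simp add: u_eq field_simps power2_eq_square)
    finally have "eq_outflow u = x * (1 - x)" .
    moreover have "q t = 0" using 2 by (intro no_queue) simp
    ultimately show ?thesis
      using u pos by (simp add: n_eq speed_def)
  next
    case 3
    have "\<tau> = 2 + 4 * q t / nj"
      using 3 pos by (simp add: \<tau>_def travel_time_p_def perim_inflow_def field_simps)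
    then have "u = 2 + 4 * q t / nj" using budget_pos 3 pos by simp
    then have "2 \<le> u" "q t = nj / 4 * (u - 2)"
      using q_nonneg pos by auto
    moreover have "n t * speed vf nj (n t) / L = nj * vf / L * (1 / 4)"
      using pos by (simp add: 3 speed_def field_simps)
    ultimately show ?thesis by (simp add: eq_outflow_def)
  qed
qed

lemma short_run_eq_p_total_outflow:
  fixes L vf nj \<alpha> \<beta> \<gamma> tstar Ns C :: real and n q :: "real \<Rightarrow> real"
  assumes pos: "L > 0" "vf > 0" "nj > 0" "\<alpha> > 0" "\<beta> > 0" "\<gamma> > 0"
    and eq: "short_run_eq_p L vf nj \<alpha> \<beta> \<gamma> tstar Ns n q C"
  shows "Ns = \<alpha> * nj * (1 / \<beta> + 1 / \<gamma>) * eq_outflow_primitive (C * vf / (\<alpha> * L))"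
proof -
  define k where "k = vf / (\<alpha> * L)"
  define \<theta> where "\<theta> = C * vf / (\<alpha> * L)"
  have k: "k > 0" using pos by (simp add: k_def)
  have outflow: "n t * speed vf nj (n t) / L
      = nj * vf / L * eq_outflow (\<theta> - k * sched_delay \<beta> \<gamma> tstar t)" for t
  proof -
    have "(C - sched_delay \<beta> \<gamma> tstar t) * vf / (\<alpha> * L) = \<theta> - k * sched_delay \<beta> \<gamma> tstar t"
      by (simp add: \<theta>_def k_def diff_divide_distrib left_diff_distrib)
    with short_run_eq_p_outflow_queue[OF pos(1-4) eq, of t] show ?thesis by simp
  qed
  have "((\<lambda>t. n t * speed vf nj (n t) / L) has_integral
      nj * vf / L * (eq_outflow_primitive \<theta> * (1 / (k * \<beta>) + 1 / (k * \<gamma>)))) UNIV"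
    unfolding outflow using k pos
    by (intro has_integral_mult_right has_integral_eq_outflow_sched_delay) auto
  moreover have "((\<lambda>t. n t * speed vf nj (n t) / L) has_integral Ns) UNIV"
    using eq by (simp add: short_run_eq_p_def)
  ultimately have "Ns = nj * vf / L * (eq_outflow_primitive \<theta> * (1 / (k * \<beta>) + 1 / (k * \<gamma>)))"
    using has_integral_unique by blast
  also have "\<dots> = \<alpha> * nj * (1 / \<beta> + 1 / \<gamma>) * eq_outflow_primitive \<theta>"
    using pos by (simp add: k_def field_simps)
  finally show ?thesis by (simp add: \<theta>_def)
qed

lemma short_run_eq_p_queue_order:
  fixes L vf nj \<alpha> \<beta> \<gamma> tstar Ns C t1 t2 :: real and n q :: "real \<Rightarrow> real"
  assumes pos: "L > 0" "vf > 0" "nj > 0" "\<alpha> > 0"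
    and eq: "short_run_eq_p L vf nj \<alpha> \<beta> \<gamma> tstar Ns n q C"
    and earlier: "sched_delay \<beta> \<gamma> tstar t2 < sched_delay \<beta> \<gamma> tstar t1"
  shows "q t1 \<le> q t2 \<and> (q t1 > 0 \<longrightarrow> q t1 < q t2)"
proof -
  define u where "u t = (C - sched_delay \<beta> \<gamma> tstar t) * vf / (\<alpha> * L)" for t
  have q: "q t = nj / 4 * max (u t - 2) 0" for t
    using short_run_eq_p_outflow_queue[OF pos eq] by (simp add: u_def)
  have "u t1 < u t2"
    using earlier pos by (simp add: u_def divide_strict_right_mono mult_strict_right_mono)
  then show ?thesis using pos(3) by (auto simp: q max_def)
qed

theorem lemma4:
  fixes L vf nj \<alpha> \<beta> \<gamma> tstar Ns C :: real and n q :: "real \<Rightarrow> real"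
  assumes "L > 0" "vf > 0" "nj > 0" "\<alpha> > 0" "\<beta> > 0" "\<gamma> > 0"
    and "Ns > \<alpha> * nj * (1 / \<beta> + 1 / \<gamma>) * (ln 2 - 1 / 2)"
    and "short_run_eq_p L vf nj \<alpha> \<beta> \<gamma> tstar Ns n q C"
  shows "Ns - \<alpha> * nj * (1 / \<beta> + 1 / \<gamma>) * ((C * vf / (\<alpha> * L)) / 4 + ln 2 - 1) = 0
    \<and> (\<exists>t. q t > 0)
    \<and> (\<forall>t1 t2. t1 < t2 \<and> t2 \<le> tstar \<longrightarrow> q t1 \<le> q t2 \<and> (q t1 > 0 \<longrightarrow> q t1 < q t2))
    \<and> (\<forall>t1 t2. tstar \<le> t1 \<and> t1 < t2 \<longrightarrow> q t2 \<le> q t1 \<and> (q t2 > 0 \<longrightarrow> q t2 < q t1))"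
proof -
  note pos = assms(1-6) and eq = assms(8)
  define \<theta> where "\<theta> = C * vf / (\<alpha> * L)"
  define A where "A = \<alpha> * nj * (1 / \<beta> + 1 / \<gamma>)"
  have Ns: "Ns = A * eq_outflow_primitive \<theta>"
    using short_run_eq_p_total_outflow[OF pos eq] by (simp add: A_def \<theta>_def)
  have "A > 0" using pos by (simp add: A_def add_pos_pos)
  have "\<theta> > 2"
  proof (rule ccontr)
    assume "\<not> \<theta> > 2"
    then have "Ns \<le> A * (ln 2 - 1 / 2)"
      unfolding Ns using \<open>A > 0\<close> eq_outflow_primitive_le_2 by (simp add: mult_left_mono)
    with assms(7) show False by (simp add: A_def)
  qed
  have q_tstar: "q tstar = nj / 4 * (\<theta> - 2)"
    using short_run_eq_p_outflow_queue[OF pos(1-4) eq, of tstar] \<open>\<theta> > 2\<close>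
    by (simp add: \<theta>_def sched_delay_def)
  have "q tstar > 0"
    unfolding q_tstar using \<open>\<theta> > 2\<close> pos by (intro mult_pos_pos) auto
  moreover have "Ns - A * (\<theta> / 4 + ln 2 - 1) = 0"
    using \<open>\<theta> > 2\<close> by (simp add: Ns eq_outflow_primitive_ge_2)
  ultimately show ?thesis
    using short_run_eq_p_queue_order[OF pos(1-4) eq]
      sched_delay_strict_antimono_early[OF pos(5)] sched_delay_strict_mono_late[OF pos(6)]
    by (auto simp: A_def \<theta>_def)
qed

end
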